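(* Let $(\mathcal A,\varphi,\mathcal F,\Phi)$ be a ncps of type B$'$ with associated infinitesimal ncps $(\mathcal B,\varphi,\varphi')$, let $q\in\mathcal F$ with $q^2=q$, $\Phi(q)=1$ and $(\mathcal A,\{q\})$ cyclic-antimonotone independent, let $p:=1_{\mathcal B}-q$, and let $\psi:=\varphi|_{p\mathcal Bp}$, $\psi':=(\varphi+\varphi')|_{p\mathcal Bp}$ on the algebra $p\mathcal Bp$ with unit $p$. Let $a\in\mathcal A$, let $\mu$ be the distribution of $a$ w.r.t. $\varphi$ and $\tau$ the inverse Markov–Krein transform of $\mu$. Then the infinitesimal distribution of $\tilde a:=pap$ with respect to $(p\mathcal Bp,\psi,\psi')$ is $(\mu,\mu-\tau)$.
   Context: Ncps of type B$'$ $(\mathcal A,\varphi,\mathcal F,\Phi)$: $\mathcal A$ unital complex algebra, $\varphi(1_{\mathcal A})=1$, $\mathcal F$ an algebra which is an $\mathcal A$-bimodule compatible with its multiplication, $\Phi:\mathcal F\to\mathbb C$ linear. $\mathcal B=\mathcal A\oplus\mathcal F$ with product $(a_1,f_1)(a_2,f_2)=(a_1a_2,a_1f_2+f_1a_2+f_1f_2)$, unit $1_{\mathcal A}$; $\varphi(a+f):=\varphi(a)$, $\varphi'(a+f):=\Phi(f)$. Cyclic-antimonotone independence of $(\mathcal A,\{q\})$: $\Phi(a_0qa_1\cdots a_{n-1}qa_n)=\varphi(a_0a_n)\prod_{i=1}^{n-1}\varphi(a_i)\Phi(q^n)$ for $a_l\in\mathcal A$. The distribution of $a$ w.r.t. $\varphi$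 is $\mu(x^n)=\varphi(a^n)$ on $\mathbb C[x]$. The infinitesimal distribution of $\tilde a$ in $(p\mathcal Bp,\psi,\psi')$ is the pair $x^n\mapsto\psi(\tilde a^n)$, $x^n\mapsto\psi'(\tilde a^n)$ with $\tilde a^0=p$. With $G_\mu(z)=\sum_{n\ge0}\mu(x^n)z^{-n-1}$ as a formal series, the inverse Markov–Krein transform of $\mu$ is the linear functional $\tau$ on $\mathbb C[x]$ determined by $\frac{d}{dz}G_\mu(z)=-G_\tau(z)G_\mu(z)$. *)

theory Defs
  imports "HOL-Computational_Algebra.Formal_Power_Series"
begin

definition cplx_algebra :: "(complex \<Rightarrow> 'r::ring \<Rightarrow> 'r) \<Rightarrow> bool" where
  "cplx_algebra sm \<longleftrightarrow>
     (\<forall>c x y. sm c (x + y) = sm c x + sm c y) \<and>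
     (\<forall>c d x. sm (c + d) x = sm c x + sm d x) \<and>
     (\<forall>c d x. sm (c * d) x = sm c (sm d x)) \<and>
     (\<forall>x. sm 1 x = x) \<and>
     (\<forall>c x y. sm c (x * y) = sm c x * y \<and> sm c (x * y) = x * sm c y)"

definition cplx_linear :: "(complex \<Rightarrow> 'r::ring \<Rightarrow> 'r) \<Rightarrow> ('r \<Rightarrow> complex) \<Rightarrow> bool" where
  "cplx_linear sm f \<longleftrightarrow> (\<forall>x y. f (x + y) = f x + f y) \<and> (\<forall>c x. f (sm c x) = c * f x)"

definition compat_bimodule ::
  "(complex \<Rightarrow> 'a::ring_1 \<Rightarrow> 'a) \<Rightarrow> (complex \<Rightarrow> 'f::ring \<Rightarrow> 'f) \<Rightarrow>
   ('a \<Rightarrow> 'f \<Rightarrow> 'f) \<Rightarrow> ('f \<Rightarrow> 'a \<Rightarrow> 'f) \<Rightarrow> bool" where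
  "compat_bimodule smA smF L R \<longleftrightarrow>
     (\<forall>a b f. L (a + b) f = L a f + L b f) \<and>
     (\<forall>a f g. L a (f + g) = L a f + L a g) \<and>
     (\<forall>a b f. R f (a + b) = R f a + R f b) \<and>
     (\<forall>a f g. R (f + g) a = R f a + R g a) \<and>
     (\<forall>f. L 1 f = f) \<and> (\<forall>f. R f 1 = f) \<and>
     (\<forall>a b f. L (a * b) f = L a (L b f)) \<and>
     (\<forall>a b f. R f (a * b) = R (R f a) b) \<and>
     (\<forall>a b f. L a (R f b) = R (L a f) b) \<and>
     (\<forall>c a f. smF c (L a f) = L (smA c a) f \<and> smF c (L a f) = L a (smF c f)) \<and>
     (\<forall>c a f. smF c (R f a) = R f (smA c a) \<and> smF c (R f a) = R (smF c f) a) \<and>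
     (\<forall>a f g. L a (f * g) = L a f * g) \<and>
     (\<forall>a f g. R (f * g) a = f * R g a) \<and>
     (\<forall>a f g. R f a * g = f * L a g)"

definition ncps_typeB' ::
  "(complex \<Rightarrow> 'a::ring_1 \<Rightarrow> 'a) \<Rightarrow> ('a \<Rightarrow> complex) \<Rightarrow> (complex \<Rightarrow> 'f::ring \<Rightarrow> 'f) \<Rightarrow>
   ('a \<Rightarrow> 'f \<Rightarrow> 'f) \<Rightarrow> ('f \<Rightarrow> 'a \<Rightarrow> 'f) \<Rightarrow> ('f \<Rightarrow> complex) \<Rightarrow> bool" where
  "ncps_typeB' smA \<phi> smF L R \<Phi> \<longleftrightarrow>
     cplx_algebra smA \<and> cplx_algebra smF \<and> compat_bimodule smA smF L R \<and>
     cplx_linear smA \<phi> \<and> \<phi> 1 = 1 \<and> cplx_linear smF \<Phi>"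

(* The algebra B = A \<oplus> F, elements represented as pairs (a, f) = a + f *)
definition Bmul :: "('a::ring_1 \<Rightarrow> 'f::ring \<Rightarrow> 'f) \<Rightarrow> ('f \<Rightarrow> 'a \<Rightarrow> 'f) \<Rightarrow>
    'a \<times> 'f \<Rightarrow> 'a \<times> 'f \<Rightarrow> 'a \<times> 'f" where
  "Bmul L R x y = (fst x * fst y, L (fst x) (snd y) + R (snd x) (fst y) + snd x * snd y)"

(* f^n for n \<ge> 1 in the (possibly non-unital) algebra F *)
fun fpow :: "'f::ring \<Rightarrow> nat \<Rightarrow> 'f" where
  "fpow f 0 = 0"
| "fpow f (Suc 0) = f"
| "fpow f (Suc (Suc n)) = f * fpow f (Suc n)"

(* the word a_0 q a_1 q ... q a_n in B, for the list [a_0,...,a_n] *)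
fun cyc_word :: "('a::ring_1 \<Rightarrow> 'f::ring \<Rightarrow> 'f) \<Rightarrow> ('f \<Rightarrow> 'a \<Rightarrow> 'f) \<Rightarrow> 'f \<Rightarrow> 'a list \<Rightarrow> 'a \<times> 'f" where
  "cyc_word L R q [] = (1, 0)"
| "cyc_word L R q [a] = (a, 0)"
| "cyc_word L R q (a # b # as) = Bmul L R (Bmul L R (a, 0) (0, q)) (cyc_word L R q (b # as))"

definition cyc_antimono_indep ::
  "('a::ring_1 \<Rightarrow> complex) \<Rightarrow> ('f::ring \<Rightarrow> complex) \<Rightarrow> ('a \<Rightarrow> 'f \<Rightarrow> 'f) \<Rightarrow> ('f \<Rightarrow> 'a \<Rightarrow> 'f) \<Rightarrow> 'f \<Rightarrow> bool" where
  "cyc_antimono_indep \<phi> \<Phi> L R q \<longleftrightarrow>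
     (\<forall>as. 2 \<le> length as \<longrightarrow>
        \<Phi> (snd (cyc_word L R q as)) =
          \<phi> (hd as * last as) * prod_list (map \<phi> (butlast (tl as))) * \<Phi> (fpow q (length as - 1)))"

(* powers in the corner algebra pBp, with x^0 = p *)
fun cpow :: "('a::ring_1 \<Rightarrow> 'f::ring \<Rightarrow> 'f) \<Rightarrow> ('f \<Rightarrow> 'a \<Rightarrow> 'f) \<Rightarrow> 'a \<times> 'f \<Rightarrow> 'a \<times> 'f \<Rightarrow> nat \<Rightarrow> 'a \<times> 'f" where
  "cpow L R p x 0 = p"
| "cpow L R p x (Suc n) = Bmul L R x (cpow L R p x n)"

(* Linear functionals on C[x] are represented by their moment sequences n \<mapsto> \<mu>(x^n).
   Formal series in z^{-1} are represented as fps in the variable w = z^{-1}: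
   coefficient k of the fps is the coefficient of z^{-k}. *)
definition Cauchy_series :: "(nat \<Rightarrow> complex) \<Rightarrow> complex fps" where
  "Cauchy_series \<mu> = Abs_fps (\<lambda>k. if k = 0 then 0 else \<mu> (k - 1))"

(* formal d/dz of \<Sum> c_k z^{-k}, namely \<Sum> -k c_k z^{-k-1} *)
definition zderiv :: "complex fps \<Rightarrow> complex fps" where
  "zderiv F = Abs_fps (\<lambda>k. - of_nat (k - 1) * fps_nth F (k - 1))"

definition inv_markov_krein :: "(nat \<Rightarrow> complex) \<Rightarrow> (nat \<Rightarrow> complex) \<Rightarrow> bool" where
  "inv_markov_krein \<mu> \<tau> \<longleftrightarrow> zderiv (Cauchy_series \<mu>) = - (Cauchy_series \<tau> * Cauchy_series \<mu>)"

end

theory Submission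
  imports Defs
begin

(* Since p = 1 - q is idempotent, (pap)^n = (pa)^n p, whose A-part is a^n.  Put
   beta_l(j) = phi'((pa)^j q a^l).  Splitting the last p of (pa)^n p gives
   phi'((pa)^n p) = - sum_{j<=n} beta_{n-j}(j).  Splitting the last p of (pa)^j, and using that
   cyclic-antimonotone independence factors phi out of every letter enclosed between two q's,
   gives the convolution identity sum_{i<=j} mu_{j-i} beta_l(i) = mu_{j+l}.  With
   M(w) = sum_n mu_n w^n (w = 1/z) this identity makes the diagonal series
   T(w) = sum_{j,l} beta_l(j) w^(j+l) satisfy T M = (w M)', which is the inverse Markov-Krein
   relation; hence T is the moment series of tau and phi'((pa)^n p) = - tau_n. *)

lemma Cauchy_series_eq: "Cauchy_series \<mu> = fps_X * Abs_fps \<mu>"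
  by (simp add: Cauchy_series_def fps_eq_iff)

lemma zderiv_Cauchy_series:
  "zderiv (Cauchy_series \<mu>) = - (fps_X ^ 2 * fps_deriv (fps_X * Abs_fps \<mu>))"
proof (rule fps_ext)
  fix n
  show "fps_nth (zderiv (Cauchy_series \<mu>)) n =
      fps_nth (- (fps_X ^ 2 * fps_deriv (fps_X * Abs_fps \<mu>))) n"
    by (cases n; cases "n - 1")
      (simp_all add: zderiv_def Cauchy_series_def fps_X_power_mult_nth del: fps_deriv_mult)
qed

lemma inv_markov_krein_iff:
  "inv_markov_krein \<mu> \<tau> \<longleftrightarrow> Abs_fps \<tau> * Abs_fps \<mu> = fps_deriv (fps_X * Abs_fps \<mu>)"
proof -
  have "Cauchy_series \<tau> * Cauchy_series \<mu> = fps_X ^ 2 * (Abs_fps \<tau> * Abs_fps \<mu>)"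
    by (simp add: Cauchy_series_eq power2_eq_square algebra_simps)
  then show ?thesis
    by (auto simp: inv_markov_krein_def zderiv_Cauchy_series simp del: fps_deriv_mult)
qed

lemma fps_mult_Abs_fps_nth:
  "fps_nth (Abs_fps s * Abs_fps t) m = (\<Sum>i\<le>m. s i * t (m - i))"
  by (simp add: fps_mult_nth atLeast0AtMost)

lemma diagonal_sum_convolution:
  fixes \<mu> :: "nat \<Rightarrow> 'a::comm_semiring_1" and \<beta> :: "nat \<Rightarrow> nat \<Rightarrow> 'a"
  assumes conv: "\<And>j l. (\<Sum>i\<le>j. \<mu> (j - i) * \<beta> l i) = \<mu> (j + l)"
  shows "(\<Sum>i\<le>m. (\<Sum>j\<le>i. \<beta> (i - j) j) * \<mu> (m - i)) = of_nat (m + 1) * \<mu> m"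
proof -
  have "(\<Sum>i\<le>m. (\<Sum>j\<le>i. \<beta> (i - j) j) * \<mu> (m - i)) =
      (\<Sum>i\<le>m. \<Sum>j\<le>i. \<mu> (m - i) * \<beta> (i - j) j)"
    by (simp add: sum_distrib_left mult.commute)
  also have "\<dots> = (\<Sum>(j, l)\<in>{(j, l). j + l \<le> m}. \<mu> (m - (j + l)) * \<beta> l j)"
    by (simp add: sum.triangle_reindex_eq)
  also have "\<dots> = (\<Sum>(l, j)\<in>{(l, j). l + j \<le> m}. \<mu> (m - l - j) * \<beta> l j)"
    by (rule sum.reindex_bij_witness[where i = "\<lambda>(l, j). (j, l)" and j = "\<lambda>(j, l). (l, j)"])
      (auto simp: add.commute)
  also have "\<dots> = (\<Sum>(l, j)\<in>Sigma {..m} (\<lambda>l. {..m - l}). \<mu> (m - l - j) * \<beta> l j)"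
    by (rule sum.cong) auto
  also have "\<dots> = (\<Sum>l\<le>m. \<Sum>j\<le>m - l. \<mu> (m - l - j) * \<beta> l j)"
    by (simp add: sum.Sigma)
  also have "\<dots> = (\<Sum>l\<le>m. \<mu> m)"
    using conv[of "m - l" l for l] by (intro sum.cong) simp_all
  finally show ?thesis by simp
qed

lemma inv_markov_krein_diagonal_sum:
  fixes \<mu> \<tau> :: "nat \<Rightarrow> complex" and \<beta> :: "nat \<Rightarrow> nat \<Rightarrow> complex"
  assumes "inv_markov_krein \<mu> \<tau>" and "\<mu> 0 \<noteq> 0"
    and "\<And>j l. (\<Sum>i\<le>j. \<mu> (j - i) * \<beta> l i) = \<mu> (j + l)"
  shows "\<tau> n = (\<Sum>j\<le>n. \<beta> (n - j) j)"
proof -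
  define t where "t n = (\<Sum>j\<le>n. \<beta> (n - j) j)" for n
  have "Abs_fps \<tau> * Abs_fps \<mu> = Abs_fps t * Abs_fps \<mu>"
    using assms(1) diagonal_sum_convolution[OF assms(3)]
    by (simp add: inv_markov_krein_iff fps_eq_iff fps_mult_Abs_fps_nth t_def del: fps_deriv_mult)
  moreover have "Abs_fps \<mu> \<noteq> 0"
    using assms(2) by (metis fps_zero_nth fps_nth_Abs_fps)
  ultimately have "Abs_fps \<tau> = Abs_fps t" by simp
  then show ?thesis by (metis fps_nth_Abs_fps t_def)
qed

locale cyc_antimono_ncps =
  fixes smA :: "complex \<Rightarrow> 'a::ring_1 \<Rightarrow> 'a" and \<phi> :: "'a \<Rightarrow> complex"
    and smF :: "complex \<Rightarrow> 'f::ring \<Rightarrow> 'f"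
    and L :: "'a \<Rightarrow> 'f \<Rightarrow> 'f" and R :: "'f \<Rightarrow> 'a \<Rightarrow> 'f" and \<Phi> :: "'f \<Rightarrow> complex"
    and q :: 'f
  assumes ncps: "ncps_typeB' smA \<phi> smF L R \<Phi>"
    and idem: "q * q = q" and trace: "\<Phi> q = 1"
    and indep: "cyc_antimono_indep \<phi> \<Phi> L R q"
begin

abbreviation Bmul_op (infixr "\<odot>" 70) where "x \<odot> y \<equiv> Bmul L R x y"

abbreviation \<phi>' :: "'a \<times> 'f \<Rightarrow> complex" where "\<phi>' x \<equiv> \<Phi> (snd x)"

abbreviation Bpow :: "'a \<times> 'f \<Rightarrow> nat \<Rightarrow> 'a \<times> 'f" where "Bpow \<equiv> cpow L R (1, 0)"

abbreviation cw :: "'a list \<Rightarrow> 'a \<times> 'f" where "cw \<equiv> cyc_word L R q"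

definition Q :: "'a \<times> 'f" where "Q = (0, q)"
definition P :: "'a \<times> 'f" where "P = (1, - q)"

lemma compat_bimodule: "compat_bimodule smA smF L R"
  using ncps by (simp add: ncps_typeB'_def)

lemma L_add: "L a (f + g) = L a f + L a g"
  and R_add: "R (f + g) a = R f a + R g a"
  and L_one [simp]: "L 1 f = f"
  and R_one [simp]: "R f 1 = f"
  and L_mult: "L (a * b) f = L a (L b f)"
  and R_mult: "R f (a * b) = R (R f a) b"
  and L_R: "L a (R f b) = R (L a f) b"
  and L_times: "L a (f * g) = L a f * g"
  and R_times: "R (f * g) a = f * R g a"
  and R_times_L: "R f a * g = f * L a g"
  using compat_bimodule by (simp_all add: compat_bimodule_def)

lemma L_zero_left [simp]: "L 0 f = 0"
  using compat_bimodule by (simp add: compat_bimodule_def) (metis add_cancel_right_right add_0)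

lemma L_zero_right [simp]: "L a 0 = 0"
  using L_add[of a 0 0] by simp

lemma R_zero_left [simp]: "R 0 a = 0"
  using R_add[of 0 0 a] by simp

lemma R_zero_right [simp]: "R f 0 = 0"
  using compat_bimodule by (simp add: compat_bimodule_def) (metis add_cancel_right_right add_0)

lemma L_minus [simp]: "L a (- f) = - L a f"
  by (metis L_add L_zero_right add.right_inverse minus_unique)

lemma R_minus [simp]: "R (- f) a = - R f a"
  by (metis R_add R_zero_left add.right_inverse minus_unique)

lemma L_diff [simp]: "L a (f - g) = L a f - L a g"
  using L_add[of a f "- g"] by simp

lemma R_diff [simp]: "R (f - g) a = R f a - R g a"
  using R_add[of f "- g" a] by simp

lemma Phi_diff: "\<Phi> (x - y) = \<Phi> x - \<Phi> y"
  using ncps unfolding ncps_typeB'_def cplx_linear_def by (metis add_diff_cancel diff_add_cancel)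

lemma Phi_zero [simp]: "\<Phi> 0 = 0"
  using Phi_diff[of 0 0] by simp

lemma phi_one [simp]: "\<phi> 1 = 1"
  using ncps by (simp add: ncps_typeB'_def)

lemma Bmul_assoc: "(x \<odot> y) \<odot> z = x \<odot> y \<odot> z"
  by (simp add: Bmul_def L_add R_add L_mult R_mult L_R L_times R_times R_times_L
      distrib_left distrib_right mult.assoc add_ac)

lemma fst_Bmul [simp]: "fst (x \<odot> y) = fst x * fst y"
  by (simp add: Bmul_def)

lemma Bmul_one_left [simp]: "(1, 0) \<odot> x = x"
  and Bmul_one_right [simp]: "x \<odot> (1, 0) = x"
  by (simp_all add: Bmul_def)

lemma Bmul_scalar_scalar [simp]: "(a, 0) \<odot> (b, 0) = (a * b, 0)"
  by (simp add: Bmul_def)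

lemma Bmul_scalar_scalar_left: "(a, 0) \<odot> (b, 0) \<odot> x = (a * b, 0) \<odot> x"
  by (simp flip: Bmul_assoc)

lemma P_idem: "P \<odot> P = P"
  by (simp add: P_def Bmul_def idem)

lemma phi'_P_split: "\<phi>' (x \<odot> P \<odot> y) = \<phi>' (x \<odot> y) - \<phi>' (x \<odot> Q \<odot> y)"
proof -
  have "snd (x \<odot> P \<odot> y) = snd (x \<odot> y) - snd (x \<odot> Q \<odot> y)"
    by (simp add: Bmul_def P_def Q_def L_add R_add L_mult R_mult L_R L_times R_times R_times_L
        algebra_simps)
  then show ?thesis by (simp add: Phi_diff)
qed

lemma fst_Bpow: "fst (Bpow x n) = fst x ^ n"
  by (induction n) simp_all

lemma Bpow_Suc_right: "Bpow x (Suc n) = Bpow x n \<odot> x"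
  by (induction n) (simp_all flip: Bmul_assoc)

lemma cpow_corner:
  assumes "e \<odot> e = e"
  shows "cpow L R e ((e \<odot> y) \<odot> e) n = Bpow (e \<odot> y) n \<odot> e"
proof (induction n)
  case 0
  then show ?case by simp
next
  case (Suc n)
  have absorb: "e \<odot> Bpow (e \<odot> y) n \<odot> e = Bpow (e \<odot> y) n \<odot> e"
    using assms by (cases n) (simp_all flip: Bmul_assoc)
  have "cpow L R e ((e \<odot> y) \<odot> e) (Suc n) = ((e \<odot> y) \<odot> e) \<odot> Bpow (e \<odot> y) n \<odot> e"
    by (simp only: cpow.simps Suc.IH)
  also have "\<dots> = (e \<odot> y) \<odot> Bpow (e \<odot> y) n \<odot> e"
    by (simp only: Bmul_assoc absorb)
  finally show ?case by (simp add: Bmul_assoc)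
qed

lemma fpow_idem: "0 < n \<Longrightarrow> fpow q n = q"
  by (induction n rule: nat_induct_non_zero) (auto simp: idem gr0_conv_Suc)

lemma phi'_cyc_word:
  "2 \<le> length as \<Longrightarrow> \<phi>' (cw as) = \<phi> (hd as * last as) * prod_list (map \<phi> (butlast (tl as)))"
  using indep by (simp add: cyc_antimono_indep_def fpow_idem trace)

lemma cyc_word_Cons: "xs \<noteq> [] \<Longrightarrow> (c, 0) \<odot> Q \<odot> cw xs = cw (c # xs)"
  by (cases xs) (simp_all add: Q_def Bmul_assoc)

lemma phi'_cyc_word_inner: "cs \<noteq> [] \<Longrightarrow> \<phi>' (cw (x # c # cs)) = \<phi> c * \<phi>' (cw (x # cs))"
  by (cases cs) (simp_all add: phi'_cyc_word del: cyc_word.simps)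

(* Cyclic-antimonotone independence gives this for u = 1; it survives right multiplication by
   A, q and p = 1 - q, hence holds for u = (pa)^n. *)
definition inner_factorizing :: "'a \<times> 'f \<Rightarrow> bool" where
  "inner_factorizing u \<longleftrightarrow> (\<forall>x c cs. cs \<noteq> [] \<longrightarrow>
     \<phi>' (u \<odot> (x, 0) \<odot> Q \<odot> cw (c # cs)) = \<phi> c * \<phi>' (u \<odot> (x, 0) \<odot> Q \<odot> cw cs))"

lemma inner_factorizing_one: "inner_factorizing (1, 0)"
  by (simp add: inner_factorizing_def cyc_word_Cons phi'_cyc_word_inner del: cyc_word.simps)

lemma inner_factorizing_mult_scalar:
  "inner_factorizing u \<Longrightarrow> inner_factorizing (u \<odot> (y, 0))"
  by (simp add: inner_factorizing_def Bmul_assoc Bmul_scalar_scalar_left)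

lemma inner_factorizing_mult_Q:
  assumes "inner_factorizing u"
  shows "inner_factorizing (u \<odot> Q)"
  unfolding inner_factorizing_def
proof (intro allI impI)
  fix x c and cs :: "'a list"
  assume "cs \<noteq> []"
  have fac: "\<phi>' (u \<odot> (1, 0) \<odot> Q \<odot> cw (c' # ds)) = \<phi> c' * \<phi>' (u \<odot> (1, 0) \<odot> Q \<odot> cw ds)"
    if "ds \<noteq> []" for c' ds
    using assms that unfolding inner_factorizing_def by blast
  have shift: "(u \<odot> Q) \<odot> (x, 0) \<odot> Q \<odot> cw ds = u \<odot> (1, 0) \<odot> Q \<odot> cw (x # ds)"
    if "ds \<noteq> []" for ds
    using that by (simp add: Bmul_assoc cyc_word_Cons del: cyc_word.simps)
  have "\<phi>' ((u \<odot> Q) \<odot> (x, 0) \<odot> Q \<odot> cw (c # cs)) = \<phi> x * \<phi>' (u \<odot> (1, 0) \<odot> Q \<odot> cw (c # cs))"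
    using shift[of "c # cs"] fac[of "c # cs" x] by simp_all
  also have "\<dots> = \<phi> c * (\<phi> x * \<phi>' (u \<odot> (1, 0) \<odot> Q \<odot> cw cs))"
    by (simp only: fac[OF \<open>cs \<noteq> []\<close>] mult.left_commute)
  also have "\<dots> = \<phi> c * \<phi>' ((u \<odot> Q) \<odot> (x, 0) \<odot> Q \<odot> cw cs)"
    by (simp only: shift[OF \<open>cs \<noteq> []\<close>] fac[OF \<open>cs \<noteq> []\<close>])
  finally show "\<phi>' ((u \<odot> Q) \<odot> (x, 0) \<odot> Q \<odot> cw (c # cs)) =
      \<phi> c * \<phi>' ((u \<odot> Q) \<odot> (x, 0) \<odot> Q \<odot> cw cs)" .
qed

lemma inner_factorizing_mult_P:
  "inner_factorizing u \<Longrightarrow> inner_factorizing (u \<odot> P)"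
  using inner_factorizing_mult_Q[of u]
  by (simp add: inner_factorizing_def Bmul_assoc phi'_P_split right_diff_distrib
      del: cyc_word.simps)

lemma inner_factorizing_Bpow_Pa: "inner_factorizing (Bpow (P \<odot> (a, 0)) n)"
proof (induction n)
  case 0
  then show ?case by (simp add: inner_factorizing_one)
next
  case (Suc n)
  have "Bpow (P \<odot> (a, 0)) (Suc n) = (Bpow (P \<odot> (a, 0)) n \<odot> P) \<odot> (a, 0)"
    by (simp only: Bpow_Suc_right Bmul_assoc)
  then show ?case
    by (simp only: Suc.IH inner_factorizing_mult_P inner_factorizing_mult_scalar)
qed

lemma inner_factorizingD:
  assumes "inner_factorizing u"
  shows "\<phi>' (u \<odot> Q \<odot> (b, 0) \<odot> Q \<odot> (c, 0)) = \<phi> b * \<phi>' (u \<odot> Q \<odot> (c, 0))"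
proof -
  have "\<phi>' (u \<odot> (1, 0) \<odot> Q \<odot> cw [b, c]) = \<phi> b * \<phi>' (u \<odot> (1, 0) \<odot> Q \<odot> cw [c])"
    using assms unfolding inner_factorizing_def by blast
  then show ?thesis by (simp add: Q_def Bmul_assoc)
qed

lemma phi'_scalar_Q_scalar: "\<phi>' ((b, 0) \<odot> Q \<odot> (c, 0)) = \<phi> (b * c)"
  using phi'_cyc_word[of "[b, c]"] by (simp add: Q_def Bmul_assoc)

lemma phi'_Bpow_Pa_Q_Suc:
  "\<phi>' (Bpow (P \<odot> (a, 0)) (Suc j) \<odot> (x, 0) \<odot> Q \<odot> (c, 0)) =
     \<phi>' (Bpow (P \<odot> (a, 0)) j \<odot> (a * x, 0) \<odot> Q \<odot> (c, 0))
     - \<phi> (a * x) * \<phi>' (Bpow (P \<odot> (a, 0)) j \<odot> Q \<odot> (c, 0))"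
proof -
  have "Bpow (P \<odot> (a, 0)) (Suc j) \<odot> (x, 0) \<odot> Q \<odot> (c, 0) =
      Bpow (P \<odot> (a, 0)) j \<odot> P \<odot> (a * x, 0) \<odot> Q \<odot> (c, 0)"
    by (simp only: Bpow_Suc_right Bmul_assoc Bmul_scalar_scalar_left)
  then show ?thesis
    by (simp only: phi'_P_split inner_factorizingD[OF inner_factorizing_Bpow_Pa])
qed

lemma phi'_Bpow_Pa_Q_powers:
  "\<phi>' (Bpow (P \<odot> (a, 0)) j \<odot> (a ^ k, 0) \<odot> Q \<odot> (a ^ l, 0)) =
     \<phi> (a ^ (j + k + l))
     - (\<Sum>i<j. \<phi> (a ^ (j - i + k)) * \<phi>' (Bpow (P \<odot> (a, 0)) i \<odot> Q \<odot> (a ^ l, 0)))"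
proof (induction j arbitrary: k)
  case 0
  then show ?case by (simp add: phi'_scalar_Q_scalar power_add)
next
  case (Suc j)
  let ?\<beta> = "\<lambda>i. \<phi>' (Bpow (P \<odot> (a, 0)) i \<odot> Q \<odot> (a ^ l, 0))"
  have sum: "(\<Sum>i<Suc j. \<phi> (a ^ (Suc j - i + k)) * ?\<beta> i) =
      (\<Sum>i<j. \<phi> (a ^ (j - i + Suc k)) * ?\<beta> i) + \<phi> (a ^ Suc k) * ?\<beta> j"
    by (simp add: Suc_diff_le del: cpow.simps)
  show ?case
    by (simp only: phi'_Bpow_Pa_Q_Suc power_Suc[symmetric] Suc.IH sum)
      (simp add: algebra_simps del: cpow.simps)
qed

lemma phi'_Bpow_Pa_Q_convolution:
  "(\<Sum>i\<le>j. \<phi> (a ^ (j - i)) * \<phi>' (Bpow (P \<odot> (a, 0)) i \<odot> Q \<odot> (a ^ l, 0))) = \<phi> (a ^ (j + l))"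
  using phi'_Bpow_Pa_Q_powers[of a j 0 l] by (simp add: lessThan_Suc_atMost[symmetric])

lemma phi'_Bpow_Pa_P:
  "\<phi>' (Bpow (P \<odot> (a, 0)) n \<odot> P \<odot> (a ^ r, 0)) =
     - (\<Sum>j\<le>n. \<phi>' (Bpow (P \<odot> (a, 0)) j \<odot> Q \<odot> (a ^ (n - j + r), 0)))"
proof (induction n arbitrary: r)
  case 0
  then show ?case using phi'_P_split[of "(1, 0)"] by simp
next
  case (Suc n)
  have "Bpow (P \<odot> (a, 0)) (Suc n) \<odot> (a ^ r, 0) = Bpow (P \<odot> (a, 0)) n \<odot> P \<odot> (a ^ Suc r, 0)"
    by (simp only: Bpow_Suc_right Bmul_assoc Bmul_scalar_scalar power_Suc)
  then have "\<phi>' (Bpow (P \<odot> (a, 0)) (Suc n) \<odot> P \<odot> (a ^ r, 0)) =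
      \<phi>' (Bpow (P \<odot> (a, 0)) n \<odot> P \<odot> (a ^ Suc r, 0))
      - \<phi>' (Bpow (P \<odot> (a, 0)) (Suc n) \<odot> Q \<odot> (a ^ r, 0))"
    by (simp only: phi'_P_split)
  also have "\<dots> = - (\<Sum>j\<le>n. \<phi>' (Bpow (P \<odot> (a, 0)) j \<odot> Q \<odot> (a ^ (n - j + Suc r), 0)))
      - \<phi>' (Bpow (P \<odot> (a, 0)) (Suc n) \<odot> Q \<odot> (a ^ r, 0))"
    by (simp only: Suc.IH)
  also have "\<dots> = - (\<Sum>j\<le>Suc n. \<phi>' (Bpow (P \<odot> (a, 0)) j \<odot> Q \<odot> (a ^ (Suc n - j + r), 0)))"
    by (simp add: Suc_diff_le cong: sum.cong_simp del: cpow.simps)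
  finally show ?case .
qed

end

theorem proposition5p4:
  fixes smA :: "complex \<Rightarrow> 'a::ring_1 \<Rightarrow> 'a" and \<phi> :: "'a \<Rightarrow> complex"
    and smF :: "complex \<Rightarrow> 'f::ring \<Rightarrow> 'f"
    and L :: "'a \<Rightarrow> 'f \<Rightarrow> 'f" and R :: "'f \<Rightarrow> 'a \<Rightarrow> 'f" and \<Phi> :: "'f \<Rightarrow> complex"
    and q :: 'f and p ta :: "'a \<times> 'f" and a :: 'a and \<mu> \<tau> :: "nat \<Rightarrow> complex"
  assumes ncps: "ncps_typeB' smA \<phi> smF L R \<Phi>"
    and idem: "q * q = q" and trace: "\<Phi> q = 1"
    and indep: "cyc_antimono_indep \<phi> \<Phi> L R q"
    and p_def: "p = (1, - q)"
    and at_def: "ta = Bmul L R (Bmul L R p (a, 0)) p"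
    and mu_def: "\<forall>n. \<mu> n = \<phi> (a ^ n)"
    and tau: "inv_markov_krein \<mu> \<tau>"
  shows "\<forall>n. \<phi> (fst (cpow L R p ta n)) = \<mu> n \<and>
             \<phi> (fst (cpow L R p ta n)) + \<Phi> (snd (cpow L R p ta n)) = \<mu> n - \<tau> n"
proof
  fix n
  interpret cyc_antimono_ncps smA \<phi> smF L R \<Phi> q
    using ncps idem trace indep by unfold_locales
  have corner: "cpow L R p ta n = Bpow (P \<odot> (a, 0)) n \<odot> P"
    unfolding at_def p_def P_def[symmetric] by (rule cpow_corner[OF P_idem])
  have "\<tau> n = (\<Sum>j\<le>n. \<phi>' (Bpow (P \<odot> (a, 0)) j \<odot> Q \<odot> (a ^ (n - j), 0)))"
    using tau
    by (rule inv_markov_krein_diagonal_sum[where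
          \<beta> = "\<lambda>l j. \<phi>' (Bpow (P \<odot> (a, 0)) j \<odot> Q \<odot> (a ^ l, 0))"])
      (simp_all add: mu_def phi'_Bpow_Pa_Q_convolution)
  then show "\<phi> (fst (cpow L R p ta n)) = \<mu> n \<and>
      \<phi> (fst (cpow L R p ta n)) + \<Phi> (snd (cpow L R p ta n)) = \<mu> n - \<tau> n"
    using phi'_Bpow_Pa_P[of a n 0] by (simp add: corner mu_def fst_Bpow P_def)
qed

end
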